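(* Let $s$ and $z$ be random signals on $\mathbb{S}^2$, both bandlimited to degree $L_f$, with spherical harmonic coefficients having finite second moments. Assume $z$ has zero mean, that $s$ and $z$ are uncorrelated, i.e. $\mathbb{E}\{(s)_n\overline{(z)_{n'}}\}=\mathbb{E}\{(z)_n\overline{(s)_{n'}}\}=0$ for all $n,n'$, and that the spectral covariance matrices $\mathbf{C}^s=(C^s_{nn'})$, $C^s_{nn'}=\mathbb{E}\{(s)_n\overline{(s)_{n'}}\}$, and $\mathbf{C}^z=(C^z_{nn'})$, $C^z_{nn'}=\mathbb{E}\{(z)_n\overline{(z)_{n'}}\}$, $0\le n,n'\le N_f$, are known. Let $f=s+z$. Consider the mean square error in the joint $SO(3)$-spectral domain $$\varepsilon=\mathbb{E}\Big\{\sum_{u=0}^{N_g}\big\|\nu(\cdot;u)-g_s(\cdot;u)\big\|_{SO(3)}^2\Big\},$$ viewed as a function of the filter coefficients $\big(\zeta(\cdot;u)\big)^p_{q,k}$, where $\nu$ is the filtered representation of $g_f$ defined in the context. For $0\le p\le L_h-1$, $|q|\le p$, $0\le u\le N_g$, let $\mathbf{F}(p,q,u)\in\mathbb{C}^{2p+1}$ have entries $F_k=\big(\zeta(\cdot;u)\big)^p_{q,k}$, $|k|\le p$. Let $\mathbf{A}(p,u)$ be the $(2p+1)\times(2p+1)$ matrix and $\mathbf{b}(p,q,u)\in\mathbb{C}^{2p+1}$ the vector with entries, for $|k|,|k'|\le p$, $$A_{k',k}=\sum_{n=0}^{N_f}\sum_{n'=0}^{N_f}T(n;p,k;u)\,\overline{T(n';p,k';u)}\,\big(C^s_{nn'}+C^z_{nn'}\big),$$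 $$b_{k'}=\sum_{n=0}^{N_f}\sum_{n'=0}^{N_f}T(n;p,q;u)\,\overline{T(n';p,k';u)}\,C^s_{nn'}.$$ Then the filter minimizing $\varepsilon$ is obtained by solving the linear systems $$\mathbf{A}(p,u)\,\mathbf{F}(p,q,u)=\mathbf{b}(p,q,u)\qquad\text{for all }0\le p\le L_h-1,\ |q|\le p,\ 0\le u\le N_g.$$ Precisely: every choice of filter coefficients satisfying all these systems minimizes $\varepsilon$; conversely, any minimizer satisfies the system for every $(p,q,u)$ with $\sum_{q'=-p}^{p}|(h)_p^{q'}|^2\neq 0$. (When a system is singular, a solution, e.g. via the Moore–Penrose pseudo-inverse, is used.)
   Context: Spherical harmonics $Y_\ell^m$ ($\ell\ge 0$, $|m|\le \ell$) form an orthonormal basis of $L^2(\mathbb{S}^2)$ with inner product $\langle f,h\rangle=\int_{\mathbb{S}^2}f(\hat x)\overline{h(\hat x)}\,ds(\hat x)$, $ds=\sin\theta\,d\theta\,d\phi$, and satisfy $\overline{Y_\ell^m}=(-1)^mY_\ell^{-m}$. Single index: $n=\ell(\ell+1)+m$, $Y_n=Y_\ell^m$, $(f)_n=(f)_\ell^m=\langle f,Y_\ell^m\rangle$. A signal is bandlimited to degree $L$ if $(f)_\ell^m=0$ for $\ell\ge L$, i.e. $(f)_n=0$ for $n\ge L^2$. $SO(3)$ is parametrized by Euler angles $\rho=(\varphi,\vartheta,\omega)$ (zyz convention), with measure $d\rho=d\varphi\,\sin\vartheta\,d\vartheta\,d\omega$, inner product $\langle g,\nu\rangle_{SO(3)}=\int_{SO(3)}g\bar\nu\,d\rho$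 and norm $\|g\|_{SO(3)}=\langle g,g\rangle_{SO(3)}^{1/2}$. The Wigner-$D$ functions $D^\ell_{m,m'}(\rho)$ satisfy $\int_{SO(3)}D^\ell_{m,m'}\overline{D^{\ell'}_{k,k'}}\,d\rho=\frac{8\pi^2}{2\ell+1}\delta_{\ell\ell'}\delta_{mk}\delta_{m'k'}$, and every $g\in L^2(SO(3))$ expands as $g=\sum_{\ell,m,m'}(g)^\ell_{m,m'}D^\ell_{m,m'}$ with $(g)^\ell_{m,m'}=\frac{2\ell+1}{8\pi^2}\langle g,D^\ell_{m,m'}\rangle_{SO(3)}$. The rotation operator $\mathcal{D}(\rho)$ on $L^2(\mathbb{S}^2)$ satisfies $\langle\mathcal{D}(\rho)h,Y_\ell^m\rangle=\sum_{m'=-\ell}^{\ell}D^\ell_{m,m'}(\rho)(h)_\ell^{m'}$. Spherical harmonic triple product: $T(n;p,q;u)=\int_{\mathbb{S}^2}Y_n(\hat x)Y_p^q(\hat x)\overline{Y_u(\hat x)}\,ds(\hat x)$. Fixed window $h\in L^2(\mathbb{S}^2)$ bandlimited to degree $L_h$. Set $L_g=L_f+L_h-1$, $N_f=L_f^2-1$, $N_g=L_g^2-1$. The DSLSHT of a signal $d$ bandlimited to $L_f$ is $g_d(\rho;u)=\int_{\mathbb{S}^2}d(\hat x)\,(\mathcal{D}(\rho)h)(\hat x)\,\overline{Y_u(\hat x)}\,ds(\hat x)$, $0\le u\le N_g$; its Wigner-$D$ coefficients in $\rho$ are $\big(g_d(\cdot;u)\big)^p_{q,q'}=\sum_{n=0}^{N_f}(d)_n(h)_p^{q'}T(n;p,q;u)$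 for $p\le L_h-1$ (and zero for $p\ge L_h$). Filter: for each $0\le u\le N_g$, a function $\zeta(\rho;u)=\sum_{p=0}^{L_h-1}\sum_{q,q'=-p}^{p}\big(\zeta(\cdot;u)\big)^p_{q,q'}D^p_{q,q'}(\rho)$. Filtered representation (SO(3) convolution of $g_f(\cdot;u)$ with $\zeta(\cdot;u)$): $$\nu(\rho;u)=\sum_{p=0}^{L_h-1}\sum_{q,q'=-p}^{p}\sum_{k=-p}^{p}\big(g_f(\cdot;u)\big)^p_{k,q'}\big(\zeta(\cdot;u)\big)^p_{q,k}D^p_{q,q'}(\rho).$$ *)

theory Defs
  imports "HOL-Probability.Probability" "HOL-Computational_Algebra.Polynomial"
          "HOL-Library.Discrete_Functions"
begin

text \<open>Associated Legendre function via Rodrigues' formula (Condon-Shortley phase),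
  valid for all -l <= m <= l:
  P_l^m(x) = (-1)^m / (2^l l!) (1-x^2)^(m/2) d^(l+m)/dx^(l+m) (x^2-1)^l.\<close>
definition assoc_legendre :: "nat \<Rightarrow> int \<Rightarrow> real \<Rightarrow> real" where
  "assoc_legendre l m x =
     (-1) ^ nat \<bar>m\<bar> / (2 ^ l * fact l) * (1 - x\<^sup>2) powr (real_of_int m / 2)
     * poly ((pderiv ^^ nat (int l + m)) ([:-1, 0, 1:] ^ l)) x"

definition sph_harm :: "nat \<Rightarrow> int \<Rightarrow> real \<Rightarrow> real \<Rightarrow> complex" where
  "sph_harm l m \<theta> \<phi> =
     complex_of_real (sqrt ((2 * real l + 1) / (4 * pi) * fact (nat (int l - m)) / fact (nat (int l + m)))
       * assoc_legendre l m (cos \<theta>)) * exp (\<i> * of_int m * complex_of_real \<phi>)"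

text \<open>Single index n = l(l+1)+m.\<close>
definition deg_of :: "nat \<Rightarrow> nat" where "deg_of n = floor_sqrt n"
definition ord_of :: "nat \<Rightarrow> int" where
  "ord_of n = int n - int (deg_of n * (deg_of n + 1))"
definition sph_harm_idx :: "nat \<Rightarrow> real \<Rightarrow> real \<Rightarrow> complex" where
  "sph_harm_idx n = sph_harm (deg_of n) (ord_of n)"

definition sphere_integral :: "(real \<Rightarrow> real \<Rightarrow> complex) \<Rightarrow> complex" where
  "sphere_integral F =
     (LINT x:{0..pi} \<times> {0..2*pi}|lborel. complex_of_real (sin (fst x)) * F (fst x) (snd x))"

definition triple :: "nat \<Rightarrow> nat \<Rightarrow> int \<Rightarrow> nat \<Rightarrow> complex" where
  "triple n p q u = sphere_integral
     (\<lambda>\<theta> \<phi>. sph_harm_idx n \<theta> \<phi> * sph_harm p q \<theta> \<phi> * cnj (sph_harm_idx u \<theta> \<phi>))"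

section \<open>SO(3), Euler angles rho = (varphi, vartheta, omega)\<close>

definition SO3_box :: "(real \<times> real \<times> real) set" where
  "SO3_box = {0..2*pi} \<times> {0..pi} \<times> {0..2*pi}"

definition so3_inner :: "(real \<times> real \<times> real \<Rightarrow> complex) \<Rightarrow> (real \<times> real \<times> real \<Rightarrow> complex) \<Rightarrow> complex" where
  "so3_inner g \<nu> = (LINT \<rho>:SO3_box|lborel. complex_of_real (sin (fst (snd \<rho>))) * g \<rho> * cnj (\<nu> \<rho>))"

definition so3_norm :: "(real \<times> real \<times> real \<Rightarrow> complex) \<Rightarrow> real" where
  "so3_norm g = sqrt (Re (so3_inner g g))"

text \<open>Signals bandlimited to L_f are represented by their coefficient sequences
  d n = (d)_n.  Wigner-D coefficient of g_d(.;u):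
  (g_d(.;u))^p_{q,q'} = sum_{n=0}^{N_f} (d)_n (h)_p^{q'} T(n;p,q;u).\<close>
definition g_coef :: "nat \<Rightarrow> (nat \<Rightarrow> int \<Rightarrow> complex) \<Rightarrow> (nat \<Rightarrow> complex)
                     \<Rightarrow> nat \<Rightarrow> nat \<Rightarrow> int \<Rightarrow> int \<Rightarrow> complex" where
  "g_coef Lf h d u p q q' = (\<Sum>n\<le>Lf\<^sup>2 - 1. d n * h p q' * triple n p q u)"

definition g_fun :: "(nat \<Rightarrow> int \<Rightarrow> int \<Rightarrow> real \<times> real \<times> real \<Rightarrow> complex) \<Rightarrow> nat \<Rightarrow> nat
     \<Rightarrow> (nat \<Rightarrow> int \<Rightarrow> complex) \<Rightarrow> (nat \<Rightarrow> complex) \<Rightarrow> nat \<Rightarrow> real \<times> real \<times> real \<Rightarrow> complex" where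
  "g_fun D Lf Lh h d u \<rho> =
     (\<Sum>p<Lh. \<Sum>q\<in>{-int p..int p}. \<Sum>q'\<in>{-int p..int p}. g_coef Lf h d u p q q' * D p q q' \<rho>)"

text \<open>Filter coefficients: zeta u p q k = (zeta(.;u))^p_{q,k}.\<close>
definition nu_fun :: "(nat \<Rightarrow> int \<Rightarrow> int \<Rightarrow> real \<times> real \<times> real \<Rightarrow> complex) \<Rightarrow> nat \<Rightarrow> nat
     \<Rightarrow> (nat \<Rightarrow> int \<Rightarrow> complex) \<Rightarrow> (nat \<Rightarrow> nat \<Rightarrow> int \<Rightarrow> int \<Rightarrow> complex) \<Rightarrow> (nat \<Rightarrow> complex)
     \<Rightarrow> nat \<Rightarrow> real \<times> real \<times> real \<Rightarrow> complex" where
  "nu_fun D Lf Lh h \<zeta> f u \<rho> =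
     (\<Sum>p<Lh. \<Sum>q\<in>{-int p..int p}. \<Sum>q'\<in>{-int p..int p}. \<Sum>k\<in>{-int p..int p}.
        g_coef Lf h f u p k q' * \<zeta> u p q k * D p q q' \<rho>)"

definition Ng :: "nat \<Rightarrow> nat \<Rightarrow> nat" where
  "Ng Lf Lh = (Lf + Lh - 1)\<^sup>2 - 1"

text \<open>Mean square error epsilon, with N_g = L_g^2 - 1, L_g = L_f + L_h - 1.\<close>
definition mse :: "'w measure \<Rightarrow> (nat \<Rightarrow> int \<Rightarrow> int \<Rightarrow> real \<times> real \<times> real \<Rightarrow> complex) \<Rightarrow> nat \<Rightarrow> nat
     \<Rightarrow> (nat \<Rightarrow> int \<Rightarrow> complex) \<Rightarrow> ('w \<Rightarrow> nat \<Rightarrow> complex) \<Rightarrow> ('w \<Rightarrow> nat \<Rightarrow> complex)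
     \<Rightarrow> (nat \<Rightarrow> nat \<Rightarrow> int \<Rightarrow> int \<Rightarrow> complex) \<Rightarrow> real" where
  "mse M D Lf Lh h s z \<zeta> =
     (LINT \<omega>|M. (\<Sum>u\<le>Ng Lf Lh.
        (so3_norm (\<lambda>\<rho>. nu_fun D Lf Lh h \<zeta> (\<lambda>n. s \<omega> n + z \<omega> n) u \<rho> - g_fun D Lf Lh h (s \<omega>) u \<rho>))\<^sup>2))"

definition cov :: "'w measure \<Rightarrow> ('w \<Rightarrow> nat \<Rightarrow> complex) \<Rightarrow> nat \<Rightarrow> nat \<Rightarrow> complex" where
  "cov M x n n' = (LINT \<omega>|M. x \<omega> n * cnj (x \<omega> n'))"

definition matA :: "'w measure \<Rightarrow> nat \<Rightarrow> ('w \<Rightarrow> nat \<Rightarrow> complex) \<Rightarrow> ('w \<Rightarrow> nat \<Rightarrow> complex)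
     \<Rightarrow> nat \<Rightarrow> nat \<Rightarrow> int \<Rightarrow> int \<Rightarrow> complex" where
  "matA M Lf s z p u k' k =
     (\<Sum>n\<le>Lf\<^sup>2 - 1. \<Sum>n'\<le>Lf\<^sup>2 - 1.
        triple n p k u * cnj (triple n' p k' u) * (cov M s n n' + cov M z n n'))"

definition vecb :: "'w measure \<Rightarrow> nat \<Rightarrow> ('w \<Rightarrow> nat \<Rightarrow> complex)
     \<Rightarrow> nat \<Rightarrow> int \<Rightarrow> nat \<Rightarrow> int \<Rightarrow> complex" where
  "vecb M Lf s p q u k' =
     (\<Sum>n\<le>Lf\<^sup>2 - 1. \<Sum>n'\<le>Lf\<^sup>2 - 1. triple n p q u * cnj (triple n' p k' u) * cov M s n n')"

definition normal_eq :: "'w measure \<Rightarrow> nat \<Rightarrow> ('w \<Rightarrow> nat \<Rightarrow> complex) \<Rightarrow> ('w \<Rightarrow> nat \<Rightarrow> complex)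
     \<Rightarrow> (nat \<Rightarrow> nat \<Rightarrow> int \<Rightarrow> int \<Rightarrow> complex) \<Rightarrow> nat \<Rightarrow> int \<Rightarrow> nat \<Rightarrow> bool" where
  "normal_eq M Lf s z \<zeta> p q u \<longleftrightarrow>
     (\<forall>k'\<in>{-int p..int p}. (\<Sum>k\<in>{-int p..int p}. matA M Lf s z p u k' k * \<zeta> u p q k) = vecb M Lf s p q u k')"

end

theory Submission
  imports Defs
begin

text \<open>By orthogonality of the Wigner-D functions the window factors out of the Wigner-D coefficients,
  and the squared SO(3) error for fixed u becomes a sum over p and q of the squared error of the linear
  fit sum_k F_k X_k of Y_q, weighted by 8 pi^2/(2p+1) sum_q' |(h)_p^q'|^2, where
  X_k = sum_n (f)_n T(n;p,k;u) and Y_q = sum_n (s)_n T(n;p,q;u). After taking expectations, the error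
  is therefore a nonnegative combination of independent least-squares problems in L^2(M), one for each
  (p,q,u) and involving only the row F(p,q,u). Such a problem is solved exactly when the residual is
  orthogonal to every X_k; as s and z are uncorrelated, these normal equations are
  A(p,u) F(p,q,u) = b(p,q,u). Problems of weight zero do not influence the error, which is why the
  converse needs sum_q' |(h)_p^q'|^2 \<noteq> 0.\<close>

section \<open>Parseval's identity for finite Wigner-D expansions\<close>

lemma compact_SO3_box: "compact SO3_box"
  unfolding SO3_box_def by (intro compact_Times compact_Icc)

lemma so3_inner_sum_sum:
  assumes "finite A" "finite B"
    and "\<And>i. i \<in> A \<Longrightarrow> continuous_on SO3_box (f i)"
    and "\<And>j. j \<in> B \<Longrightarrow> continuous_on SO3_box (g j)"
  shows "so3_inner (\<lambda>\<rho>. \<Sum>i\<in>A. a i * f i \<rho>) (\<lambda>\<rho>. \<Sum>j\<in>B. b j * g j \<rho>)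
       = (\<Sum>i\<in>A. \<Sum>j\<in>B. a i * cnj (b j) * so3_inner (f i) (g j))"
proof -
  define F where "F i j \<rho> = indicator SO3_box \<rho> *\<^sub>R
      (complex_of_real (sin (fst (snd \<rho>))) * f i \<rho> * cnj (g j \<rho>))" for i j \<rho>
  have int: "integrable lborel (F i j)" if "i \<in> A" "j \<in> B" for i j
    unfolding F_def using assms that
    by (intro borel_integrable_compact compact_SO3_box continuous_intros) auto
  have pointwise: "indicator SO3_box \<rho> *\<^sub>R (complex_of_real (sin (fst (snd \<rho>))) * (\<Sum>i\<in>A. a i * f i \<rho>)
          * cnj (\<Sum>j\<in>B. b j * g j \<rho>)) = (\<Sum>i\<in>A. \<Sum>j\<in>B. a i * cnj (b j) * F i j \<rho>)" for \<rho>
    unfolding F_def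
    by (simp add: sum_distrib_left sum_distrib_right cnj_sum scaleR_sum_right algebra_simps)
  have "so3_inner (\<lambda>\<rho>. \<Sum>i\<in>A. a i * f i \<rho>) (\<lambda>\<rho>. \<Sum>j\<in>B. b j * g j \<rho>)
      = integral\<^sup>L lborel (\<lambda>\<rho>. \<Sum>i\<in>A. \<Sum>j\<in>B. a i * cnj (b j) * F i j \<rho>)"
    unfolding so3_inner_def set_lebesgue_integral_def pointwise ..
  also have "\<dots> = (\<Sum>i\<in>A. \<Sum>j\<in>B. a i * cnj (b j) * integral\<^sup>L lborel (F i j))"
    using int by (simp add: Bochner_Integration.integrable_sum)
  also have "\<dots> = (\<Sum>i\<in>A. \<Sum>j\<in>B. a i * cnj (b j) * so3_inner (f i) (g j))"
    unfolding so3_inner_def set_lebesgue_integral_def F_def ..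
  finally show ?thesis .
qed

definition wigner_indices :: "nat \<Rightarrow> (nat \<times> int \<times> int) set" where
  "wigner_indices L = (SIGMA p:{..<L}. {-int p..int p} \<times> {-int p..int p})"

lemma finite_wigner_indices: "finite (wigner_indices L)"
  unfolding wigner_indices_def by (intro finite_SigmaI finite_cartesian_product) auto

lemma sum_wigner_indices:
  "(\<Sum>p<L. \<Sum>q\<in>{-int p..int p}. \<Sum>q'\<in>{-int p..int p}. F p q q')
   = (\<Sum>(p, q, q')\<in>wigner_indices L. F p q q')"
proof -
  have "(\<Sum>q\<in>{-int p..int p}. \<Sum>q'\<in>{-int p..int p}. F p q q')
      = (\<Sum>(q, q')\<in>{-int p..int p} \<times> {-int p..int p}. F p q q')" for p
    by (simp add: sum.cartesian_product)
  then have "(\<Sum>p<L. \<Sum>q\<in>{-int p..int p}. \<Sum>q'\<in>{-int p..int p}. F p q q')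
      = (\<Sum>p<L. \<Sum>(q, q')\<in>{-int p..int p} \<times> {-int p..int p}. F p q q')"
    by simp
  also have "(\<Sum>p<L. \<Sum>(q, q')\<in>{-int p..int p} \<times> {-int p..int p}. F p q q')
      = (\<Sum>(p, q, q')\<in>wigner_indices L. F p q q')"
    unfolding wigner_indices_def by (subst sum.Sigma) (auto simp: split_beta)
  finally show ?thesis .
qed

locale wigner_basis =
  fixes D :: "nat \<Rightarrow> int \<Rightarrow> int \<Rightarrow> real \<times> real \<times> real \<Rightarrow> complex"
  assumes continuous_D: "\<And>l m m'. continuous_on SO3_box (D l m m')"
    and orthogonal_D: "\<And>l m m' l' k k'. \<bar>m\<bar> \<le> int l \<Longrightarrow> \<bar>m'\<bar> \<le> int l \<Longrightarrow> \<bar>k\<bar> \<le> int l' \<Longrightarrow> \<bar>k'\<bar> \<le> int l' \<Longrightarrow>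
        so3_inner (D l m m') (D l' k k') =
          (if l = l' \<and> m = k \<and> m' = k' then complex_of_real (8 * pi\<^sup>2 / (2 * real l + 1)) else 0)"
begin

lemma so3_inner_wigner_sum_self:
  fixes L :: nat and c :: "nat \<Rightarrow> int \<Rightarrow> int \<Rightarrow> complex"
  defines "G \<equiv> \<lambda>\<rho>. \<Sum>p<L. \<Sum>q\<in>{-int p..int p}. \<Sum>q'\<in>{-int p..int p}. c p q q' * D p q q' \<rho>"
  shows "so3_inner G G = complex_of_real (\<Sum>p<L. \<Sum>q\<in>{-int p..int p}. \<Sum>q'\<in>{-int p..int p}.
             8 * pi\<^sup>2 / (2 * real p + 1) * (cmod (c p q q'))\<^sup>2)"
proof -
  let ?I = "wigner_indices L"
  define cx where "cx = (\<lambda>(p, q, q'). c p q q')"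
  define Dx where "Dx = (\<lambda>(p, q, q'). D p q q')"
  define w :: "nat \<times> int \<times> int \<Rightarrow> complex"
    where "w = (\<lambda>(p, q, q'). complex_of_real (8 * pi\<^sup>2 / (2 * real p + 1)))"
  have G: "G = (\<lambda>\<rho>. \<Sum>x\<in>?I. cx x * Dx x \<rho>)"
    unfolding G_def sum_wigner_indices cx_def Dx_def by (simp add: split_beta)
  have orth: "so3_inner (Dx x) (Dx y) = (if x = y then w x else 0)" if "x \<in> ?I" "y \<in> ?I" for x y
    using that unfolding Dx_def w_def wigner_indices_def by (auto simp: orthogonal_D split: prod.splits)
  have "so3_inner G G = (\<Sum>x\<in>?I. \<Sum>y\<in>?I. cx x * cnj (cx y) * so3_inner (Dx x) (Dx y))"
    unfolding G by (rule so3_inner_sum_sum)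
      (auto simp: finite_wigner_indices Dx_def continuous_D split: prod.splits)
  also have "\<dots> = (\<Sum>x\<in>?I. \<Sum>y\<in>?I. if x = y then cx x * cnj (cx x) * w x else 0)"
    by (intro sum.cong refl) (simp add: orth)
  also have "\<dots> = (\<Sum>x\<in>?I. cx x * cnj (cx x) * w x)"
    by (simp add: finite_wigner_indices sum.delta)
  also have "\<dots> = complex_of_real (\<Sum>(p, q, q')\<in>?I. 8 * pi\<^sup>2 / (2 * real p + 1) * (cmod (c p q q'))\<^sup>2)"
    by (simp add: cx_def w_def split_beta complex_norm_square[symmetric] mult.commute)
  finally show ?thesis unfolding sum_wigner_indices .
qed

end

section \<open>The error of a single realization\<close>

definition triple_proj :: "nat \<Rightarrow> (nat \<Rightarrow> complex) \<Rightarrow> nat \<Rightarrow> nat \<Rightarrow> int \<Rightarrow> complex" where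
  "triple_proj Lf d u p k = (\<Sum>n\<le>Lf\<^sup>2 - 1. triple n p k u * d n)"

lemma g_coef_eq_triple_proj: "g_coef Lf h d u p q q' = h p q' * triple_proj Lf d u p q"
  unfolding g_coef_def triple_proj_def by (simp add: sum_distrib_left algebra_simps)

definition window_weight :: "(nat \<Rightarrow> int \<Rightarrow> complex) \<Rightarrow> nat \<Rightarrow> real" where
  "window_weight h p = 8 * pi\<^sup>2 / (2 * real p + 1) * (\<Sum>q'\<in>{-int p..int p}. (cmod (h p q'))\<^sup>2)"

lemma window_weight_nonneg: "0 \<le> window_weight h p"
  unfolding window_weight_def by (intro mult_nonneg_nonneg sum_nonneg) auto

lemma window_weight_pos:
  assumes "(\<Sum>q'\<in>{-int p..int p}. (cmod (h p q'))\<^sup>2) \<noteq> 0"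
  shows "0 < window_weight h p"
proof -
  have "0 \<le> (\<Sum>q'\<in>{-int p..int p}. (cmod (h p q'))\<^sup>2)" by (intro sum_nonneg) auto
  with assms show ?thesis unfolding window_weight_def by (intro mult_pos_pos) auto
qed

lemma (in wigner_basis) so3_norm_nu_minus_g_squared:
  "(so3_norm (\<lambda>\<rho>. nu_fun D Lf L h \<zeta> f u \<rho> - g_fun D Lf L h s u \<rho>))\<^sup>2
     = (\<Sum>p<L. window_weight h p * (\<Sum>q\<in>{-int p..int p}.
          (cmod ((\<Sum>k\<in>{-int p..int p}. triple_proj Lf f u p k * \<zeta> u p q k) - triple_proj Lf s u p q))\<^sup>2))"
proof -
  define R where "R p q = (\<Sum>k\<in>{-int p..int p}. triple_proj Lf f u p k * \<zeta> u p q k) - triple_proj Lf s u p q"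
    for p q
  define E where "E \<rho> = nu_fun D Lf L h \<zeta> f u \<rho> - g_fun D Lf L h s u \<rho>" for \<rho>
  have "E = (\<lambda>\<rho>. \<Sum>p<L. \<Sum>q\<in>{-int p..int p}. \<Sum>q'\<in>{-int p..int p}. (h p q' * R p q) * D p q q' \<rho>)"
    unfolding E_def fun_eq_iff nu_fun_def g_fun_def R_def
    by (simp add: g_coef_eq_triple_proj sum_subtractf sum_distrib_left sum_distrib_right algebra_simps)
  then have "Re (so3_inner E E) = (\<Sum>p<L. \<Sum>q\<in>{-int p..int p}. \<Sum>q'\<in>{-int p..int p}.
             8 * pi\<^sup>2 / (2 * real p + 1) * (cmod (h p q' * R p q))\<^sup>2)"
    by (simp only: so3_inner_wigner_sum_self Re_complex_of_real)
  also have "\<dots> = (\<Sum>p<L. window_weight h p * (\<Sum>q\<in>{-int p..int p}. (cmod (R p q))\<^sup>2))"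
    unfolding window_weight_def
    by (intro sum.cong refl)
       (simp add: norm_mult power_mult_distrib sum_distrib_left sum_distrib_right sum_divide_distrib mult_ac,
        rule sum.swap)
  finally have "Re (so3_inner E E) = \<dots>" .
  moreover have "0 \<le> (\<Sum>p<L. window_weight h p * (\<Sum>q\<in>{-int p..int p}. (cmod (R p q))\<^sup>2))"
    by (intro sum_nonneg mult_nonneg_nonneg window_weight_nonneg) auto
  ultimately show ?thesis unfolding so3_norm_def E_def R_def by simp
qed

section \<open>Least squares in \<open>L\<^sup>2(M)\<close>\<close>

definition square_integrable :: "'w measure \<Rightarrow> ('w \<Rightarrow> complex) \<Rightarrow> bool" where
  "square_integrable M g \<longleftrightarrow> g \<in> borel_measurable M \<and> integrable M (\<lambda>\<omega>. (cmod (g \<omega>))\<^sup>2)"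

lemma integrable_mult_cnj:
  assumes "square_integrable M g" "square_integrable M g'"
  shows "integrable M (\<lambda>\<omega>. g \<omega> * cnj (g' \<omega>))"
proof (rule Bochner_Integration.integrable_bound)
  show "integrable M (\<lambda>\<omega>. (cmod (g \<omega>))\<^sup>2 + (cmod (g' \<omega>))\<^sup>2)"
    using assms unfolding square_integrable_def by auto
  have "(\<lambda>\<omega>. cnj (g' \<omega>)) \<in> borel_measurable M"
    using assms unfolding square_integrable_def
    by (intro borel_measurable_continuous_on[where f = cnj] continuous_intros) auto
  then show "(\<lambda>\<omega>. g \<omega> * cnj (g' \<omega>)) \<in> borel_measurable M"
    using assms unfolding square_integrable_def by auto
  have "cmod a * cmod b \<le> (cmod a)\<^sup>2 + (cmod b)\<^sup>2" for a b
    using sum_squares_bound[of "cmod a" "cmod b"] mult_nonneg_nonneg[OF norm_ge_zero norm_ge_zero, of a b]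
    by linarith
  then show "AE \<omega> in M. norm (g \<omega> * cnj (g' \<omega>)) \<le> norm ((cmod (g \<omega>))\<^sup>2 + (cmod (g' \<omega>))\<^sup>2)"
    by (simp add: norm_mult)
qed

lemma cmod_add_squared: "(cmod (a + b))\<^sup>2 = (cmod a)\<^sup>2 + 2 * Re (a * cnj b) + (cmod b)\<^sup>2"
  unfolding cmod_power2 by (simp add: power2_eq_square algebra_simps)

lemma square_integrable_add:
  assumes "square_integrable M g" "square_integrable M g'"
  shows "square_integrable M (\<lambda>\<omega>. g \<omega> + g' \<omega>)"
  using assms integrable_mult_cnj[OF assms]
  unfolding square_integrable_def cmod_add_squared
  by (intro conjI borel_measurable_add Bochner_Integration.integrable_add integrable_mult_right
      integrable_Re) auto

lemma square_integrable_cmult: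
  "square_integrable M g \<Longrightarrow> square_integrable M (\<lambda>\<omega>. c * g \<omega>)"
  unfolding square_integrable_def by (auto simp: norm_mult power_mult_distrib)

lemma square_integrable_sum:
  "(\<And>i. i \<in> A \<Longrightarrow> square_integrable M (g i)) \<Longrightarrow> square_integrable M (\<lambda>\<omega>. \<Sum>i\<in>A. g i \<omega>)"
  by (induction A rule: infinite_finite_induct)
     (auto simp: square_integrable_add, auto simp: square_integrable_def)

lemma square_integrable_lincomb:
  "(\<And>i. i \<in> A \<Longrightarrow> square_integrable M (g i)) \<Longrightarrow> square_integrable M (\<lambda>\<omega>. \<Sum>i\<in>A. c i * g i \<omega>)"
  by (intro square_integrable_sum square_integrable_cmult)

lemma square_integrable_diff:
  "square_integrable M g \<Longrightarrow> square_integrable M g' \<Longrightarrow> square_integrable M (\<lambda>\<omega>. g \<omega> - g' \<omega>)"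
  using square_integrable_add[of M g "\<lambda>\<omega>. -1 * g' \<omega>"] square_integrable_cmult[of M g' "-1"] by simp

lemma integral_lincomb_mult_cnj:
  assumes "finite A" "finite B"
    and "\<And>i. i \<in> A \<Longrightarrow> square_integrable M (g i)" "\<And>j. j \<in> B \<Longrightarrow> square_integrable M (g' j)"
  shows "(LINT \<omega>|M. (\<Sum>i\<in>A. a i * g i \<omega>) * cnj (\<Sum>j\<in>B. b j * g' j \<omega>))
       = (\<Sum>i\<in>A. \<Sum>j\<in>B. a i * cnj (b j) * (LINT \<omega>|M. g i \<omega> * cnj (g' j \<omega>)))"
proof -
  have "(\<Sum>i\<in>A. a i * g i \<omega>) * cnj (\<Sum>j\<in>B. b j * g' j \<omega>)
     = (\<Sum>i\<in>A. \<Sum>j\<in>B. a i * cnj (b j) * (g i \<omega> * cnj (g' j \<omega>)))" for \<omega>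
    by (simp add: sum_product cnj_sum mult_ac)
  moreover have "integrable M (\<lambda>\<omega>. g i \<omega> * cnj (g' j \<omega>))" if "i \<in> A" "j \<in> B" for i j
    using assms that by (intro integrable_mult_cnj) auto
  ultimately show ?thesis
    by (simp add: Bochner_Integration.integrable_sum)
qed

lemma integral_add_mult_cnj:
  assumes "square_integrable M a" "square_integrable M b" "square_integrable M c"
  shows "(LINT \<omega>|M. (a \<omega> + b \<omega>) * cnj (c \<omega>)) = (LINT \<omega>|M. a \<omega> * cnj (c \<omega>)) + (LINT \<omega>|M. b \<omega> * cnj (c \<omega>))"
  using integrable_mult_cnj[OF assms(1,3)] integrable_mult_cnj[OF assms(2,3)]
  by (simp add: distrib_right)

lemma integral_mult_cnj_add:
  assumes "square_integrable M a" "square_integrable M b" "square_integrable M c"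
  shows "(LINT \<omega>|M. a \<omega> * cnj (b \<omega> + c \<omega>)) = (LINT \<omega>|M. a \<omega> * cnj (b \<omega>)) + (LINT \<omega>|M. a \<omega> * cnj (c \<omega>))"
  using integrable_mult_cnj[OF assms(1,2)] integrable_mult_cnj[OF assms(1,3)]
  by (simp add: distrib_left)

definition mean_sq_residual :: "'w measure \<Rightarrow> 'i set \<Rightarrow> ('i \<Rightarrow> 'w \<Rightarrow> complex) \<Rightarrow> ('w \<Rightarrow> complex)
    \<Rightarrow> ('i \<Rightarrow> complex) \<Rightarrow> real" where
  "mean_sq_residual M K X Y \<phi> = (LINT \<omega>|M. (cmod ((\<Sum>k\<in>K. X k \<omega> * \<phi> k) - Y \<omega>))\<^sup>2)"

definition normal_equations :: "'w measure \<Rightarrow> 'i set \<Rightarrow> ('i \<Rightarrow> 'w \<Rightarrow> complex) \<Rightarrow> ('w \<Rightarrow> complex)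
    \<Rightarrow> ('i \<Rightarrow> complex) \<Rightarrow> bool" where
  "normal_equations M K X Y \<phi> \<longleftrightarrow>
     (\<forall>k'\<in>K. (\<Sum>k\<in>K. (LINT \<omega>|M. X k \<omega> * cnj (X k' \<omega>)) * \<phi> k) = (LINT \<omega>|M. Y \<omega> * cnj (X k' \<omega>)))"

context
  fixes M :: "'w measure" and K :: "'i set" and X :: "'i \<Rightarrow> 'w \<Rightarrow> complex" and Y :: "'w \<Rightarrow> complex"
  assumes finite_K: "finite K"
    and square_integrable_X: "\<And>k. k \<in> K \<Longrightarrow> square_integrable M (X k)"
    and square_integrable_Y: "square_integrable M Y"
begin

lemma square_integrable_residual: "square_integrable M (\<lambda>\<omega>. (\<Sum>k\<in>K. X k \<omega> * \<phi> k) - Y \<omega>)"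
  using square_integrable_lincomb[of K M X \<phi>] square_integrable_X
  by (intro square_integrable_diff square_integrable_Y) (simp add: mult.commute)

lemma integrable_sq_residual: "integrable M (\<lambda>\<omega>. (cmod ((\<Sum>k\<in>K. X k \<omega> * \<phi> k) - Y \<omega>))\<^sup>2)"
  using square_integrable_residual unfolding square_integrable_def by simp

lemma integral_residual_mult_cnj:
  assumes "square_integrable M Z"
  shows "(LINT \<omega>|M. ((\<Sum>k\<in>K. X k \<omega> * \<phi> k) - Y \<omega>) * cnj (Z \<omega>))
       = (\<Sum>k\<in>K. (LINT \<omega>|M. X k \<omega> * cnj (Z \<omega>)) * \<phi> k) - (LINT \<omega>|M. Y \<omega> * cnj (Z \<omega>))"
proof -
  have "((\<Sum>k\<in>K. X k \<omega> * \<phi> k) - Y \<omega>) * cnj (Z \<omega>)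
      = (\<Sum>k\<in>K. (X k \<omega> * cnj (Z \<omega>)) * \<phi> k) - Y \<omega> * cnj (Z \<omega>)" for \<omega>
    by (simp add: algebra_simps sum_distrib_left)
  moreover have "integrable M (\<lambda>\<omega>. X k \<omega> * cnj (Z \<omega>))" if "k \<in> K" for k
    using square_integrable_X[OF that] assms by (rule integrable_mult_cnj)
  ultimately show ?thesis
    using integrable_mult_cnj[OF square_integrable_Y assms]
    by (simp add: Bochner_Integration.integrable_sum)
qed

lemma normal_equations_iff_residual_orthogonal:
  "normal_equations M K X Y \<phi> \<longleftrightarrow>
     (\<forall>k'\<in>K. (LINT \<omega>|M. ((\<Sum>k\<in>K. X k \<omega> * \<phi> k) - Y \<omega>) * cnj (X k' \<omega>)) = 0)"
  unfolding normal_equations_def by (simp add: integral_residual_mult_cnj square_integrable_X)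

lemma mean_sq_residual_change:
  "mean_sq_residual M K X Y \<psi> = mean_sq_residual M K X Y \<phi>
     + 2 * Re (\<Sum>k\<in>K. cnj (\<psi> k - \<phi> k) * (LINT \<omega>|M. ((\<Sum>k\<in>K. X k \<omega> * \<phi> k) - Y \<omega>) * cnj (X k \<omega>)))
     + (LINT \<omega>|M. (cmod (\<Sum>k\<in>K. X k \<omega> * (\<psi> k - \<phi> k)))\<^sup>2)"
proof -
  define e where "e \<omega> = (\<Sum>k\<in>K. X k \<omega> * \<phi> k) - Y \<omega>" for \<omega>
  define W where "W \<omega> = (\<Sum>k\<in>K. (\<psi> k - \<phi> k) * X k \<omega>)" for \<omega>
  have e: "square_integrable M e"
    unfolding e_def by (rule square_integrable_residual)
  have W: "square_integrable M W"
    unfolding W_def by (intro square_integrable_lincomb square_integrable_X)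
  have eW: "integrable M (\<lambda>\<omega>. e \<omega> * cnj (W \<omega>))" by (rule integrable_mult_cnj[OF e W])
  have residual: "(\<Sum>k\<in>K. X k \<omega> * \<psi> k) - Y \<omega> = e \<omega> + W \<omega>" for \<omega>
    unfolding e_def W_def by (simp add: algebra_simps sum_subtractf)
  have "mean_sq_residual M K X Y \<psi>
      = (LINT \<omega>|M. (cmod (e \<omega>))\<^sup>2 + 2 * Re (e \<omega> * cnj (W \<omega>)) + (cmod (W \<omega>))\<^sup>2)"
    unfolding mean_sq_residual_def by (simp only: residual cmod_add_squared)
  also have "\<dots> = (LINT \<omega>|M. (cmod (e \<omega>))\<^sup>2) + (LINT \<omega>|M. 2 * Re (e \<omega> * cnj (W \<omega>)))
      + (LINT \<omega>|M. (cmod (W \<omega>))\<^sup>2)"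
    using e W integrable_mult_right[OF integrable_Re[OF eW], of 2] unfolding square_integrable_def
    by (subst Bochner_Integration.integral_add; (intro Bochner_Integration.integrable_add)?; simp only:)+
  also have "(LINT \<omega>|M. 2 * Re (e \<omega> * cnj (W \<omega>))) = 2 * Re (LINT \<omega>|M. e \<omega> * cnj (W \<omega>))"
    by (simp only: integral_mult_right_zero integral_Re[OF eW])
  also have "(LINT \<omega>|M. e \<omega> * cnj (W \<omega>)) = (\<Sum>k\<in>K. cnj (\<psi> k - \<phi> k) * (LINT \<omega>|M. e \<omega> * cnj (X k \<omega>)))"
    using integral_lincomb_mult_cnj[where A = "{()}" and B = K and g = "\<lambda>_. e" and g' = X
        and a = "\<lambda>_. 1" and b = "\<lambda>k. \<psi> k - \<phi> k"]
    unfolding W_def using e square_integrable_X finite_K by (simp add: mult.commute)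
  finally show ?thesis
    unfolding mean_sq_residual_def e_def W_def by (simp add: mult.commute)
qed

lemma normal_equations_imp_minimal:
  assumes "normal_equations M K X Y \<phi>"
  shows "mean_sq_residual M K X Y \<phi> \<le> mean_sq_residual M K X Y \<psi>"
  using assms unfolding normal_equations_iff_residual_orthogonal
  by (subst mean_sq_residual_change[of \<psi> \<phi>]) (auto intro!: integral_nonneg_AE)

lemma mean_sq_residual_coordinate_step:
  assumes "k0 \<in> K"
  shows "mean_sq_residual M K X Y (\<phi>(k0 := \<phi> k0 + c)) = mean_sq_residual M K X Y \<phi>
     + 2 * Re (cnj c * (LINT \<omega>|M. ((\<Sum>k\<in>K. X k \<omega> * \<phi> k) - Y \<omega>) * cnj (X k0 \<omega>)))
     + (cmod c)\<^sup>2 * (LINT \<omega>|M. (cmod (X k0 \<omega>))\<^sup>2)"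
proof -
  define \<psi> where "\<psi> = \<phi>(k0 := \<phi> k0 + c)"
  have "(\<Sum>k\<in>K. cnj (\<psi> k - \<phi> k) * G k) = (\<Sum>k\<in>K. if k = k0 then cnj c * G k0 else 0)" for G
    unfolding \<psi>_def by (intro sum.cong) simp_all
  then have gradient: "(\<Sum>k\<in>K. cnj (\<psi> k - \<phi> k) * G k) = cnj c * G k0" for G
    using assms finite_K by simp
  have "(\<Sum>k\<in>K. X k \<omega> * (\<psi> k - \<phi> k)) = (\<Sum>k\<in>K. if k = k0 then X k0 \<omega> * c else 0)" for \<omega>
    unfolding \<psi>_def by (intro sum.cong) simp_all
  then have step: "(\<Sum>k\<in>K. X k \<omega> * (\<psi> k - \<phi> k)) = X k0 \<omega> * c" for \<omega>
    using assms finite_K by simp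
  show ?thesis
    unfolding \<psi>_def[symmetric] mean_sq_residual_change[of \<psi> \<phi>] gradient step
    by (simp add: norm_mult power_mult_distrib mult.commute)
qed

text \<open>A step of length \<open>1 / (B + 1)\<close> against the gradient in a coordinate violating the normal
  equations decreases the error, since its first-order gain dominates its quadratic cost.\<close>
lemma not_normal_equations_imp_decrease:
  assumes "\<not> normal_equations M K X Y \<phi>"
  shows "\<exists>\<psi>. mean_sq_residual M K X Y \<psi> < mean_sq_residual M K X Y \<phi>"
proof -
  obtain k0 where k0: "k0 \<in> K"
    and a: "(LINT \<omega>|M. ((\<Sum>k\<in>K. X k \<omega> * \<phi> k) - Y \<omega>) * cnj (X k0 \<omega>)) \<noteq> 0" (is "?a \<noteq> 0")
    using assms unfolding normal_equations_iff_residual_orthogonal by blast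
  define B where "B = (LINT \<omega>|M. (cmod (X k0 \<omega>))\<^sup>2)"
  have "0 \<le> B" unfolding B_def by (intro integral_nonneg_AE) auto
  define c where "c = - ?a / complex_of_real (B + 1)"
  define A where "A = cmod ?a"
  have "cnj c * ?a = - complex_of_real (A\<^sup>2 / (B + 1))"
    unfolding c_def A_def of_real_divide complex_norm_square by (simp add: mult.commute)
  moreover have "cmod c = A / (B + 1)"
    unfolding c_def A_def using \<open>0 \<le> B\<close> by (simp add: norm_divide)
  ultimately have "mean_sq_residual M K X Y (\<phi>(k0 := \<phi> k0 + c))
      = mean_sq_residual M K X Y \<phi> + (2 * (- (A\<^sup>2 / (B + 1))) + (A / (B + 1))\<^sup>2 * B)"
    unfolding mean_sq_residual_coordinate_step[OF k0] B_def by simp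
  also have "2 * (- (A\<^sup>2 / (B + 1))) + (A / (B + 1))\<^sup>2 * B = - A\<^sup>2 * (B + 2) / (B + 1)\<^sup>2"
    using \<open>0 \<le> B\<close> by (simp add: divide_simps) algebra
  also have "\<dots> < 0"
    using a \<open>0 \<le> B\<close> unfolding A_def by (simp add: divide_neg_pos mult_pos_pos)
  finally show ?thesis by (intro exI[of _ "\<phi>(k0 := \<phi> k0 + c)"]) linarith
qed

lemma minimal_iff_normal_equations:
  "(\<forall>\<psi>. mean_sq_residual M K X Y \<phi> \<le> mean_sq_residual M K X Y \<psi>) \<longleftrightarrow> normal_equations M K X Y \<phi>"
  using normal_equations_imp_minimal not_normal_equations_imp_decrease by (meson not_le)

end

section \<open>Separation of the error functional\<close>

lemma sum_less_sum_single:
  fixes f g :: "'a \<Rightarrow> 'b::ordered_cancel_comm_monoid_add"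
  assumes "finite A" "a \<in> A" "\<And>x. x \<in> A \<Longrightarrow> x \<noteq> a \<Longrightarrow> f x = g x" "f a < g a"
  shows "sum f A < sum g A"
proof -
  have "f x \<le> g x" if "x \<in> A" for x
    using assms that by (cases "x = a") auto
  then show ?thesis
    using assms by (intro sum_strict_mono_ex1) auto
qed

lemma minimal_weighted_block_sum_imp_minimal_block:
  fixes V :: "'u \<Rightarrow> 'p \<Rightarrow> 'q \<Rightarrow> 'a \<Rightarrow> real"
  assumes minimal: "\<forall>\<zeta>'. (\<Sum>u'\<in>U. \<Sum>p'\<in>P. w p' * (\<Sum>q'\<in>Q p'. V u' p' q' (\<zeta> u' p' q')))
                     \<le> (\<Sum>u'\<in>U. \<Sum>p'\<in>P. w p' * (\<Sum>q'\<in>Q p'. V u' p' q' (\<zeta>' u' p' q')))"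
    and "finite U" "finite P" "\<And>p. finite (Q p)"
    and "u \<in> U" "p \<in> P" "q \<in> Q p" "0 < w p"
  shows "V u p q (\<zeta> u p q) \<le> V u p q \<phi>"
proof (rule ccontr)
  assume "\<not> V u p q (\<zeta> u p q) \<le> V u p q \<phi>"
  then have "(\<Sum>u'\<in>U. \<Sum>p'\<in>P. w p' * (\<Sum>q'\<in>Q p'. V u' p' q' ((\<zeta>(u := (\<zeta> u)(p := (\<zeta> u p)(q := \<phi>)))) u' p' q')))
       < (\<Sum>u'\<in>U. \<Sum>p'\<in>P. w p' * (\<Sum>q'\<in>Q p'. V u' p' q' (\<zeta> u' p' q')))"
    using assms
    by (intro sum_less_sum_single[of _ u] sum_less_sum_single[of _ p] mult_strict_left_mono
        sum_less_sum_single[of _ q]) auto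
  with minimal show False by (meson not_le)
qed

lemma square_integrable_triple_proj:
  "(\<And>n. square_integrable M (\<lambda>\<omega>. d \<omega> n)) \<Longrightarrow> square_integrable M (\<lambda>\<omega>. triple_proj Lf (d \<omega>) u p k)"
  unfolding triple_proj_def by (intro square_integrable_lincomb)

lemma integral_triple_proj_mult_cnj:
  assumes "\<And>n. square_integrable M (\<lambda>\<omega>. d \<omega> n)" "\<And>n. square_integrable M (\<lambda>\<omega>. e \<omega> n)"
  shows "(LINT \<omega>|M. triple_proj Lf (d \<omega>) u p k * cnj (triple_proj Lf (e \<omega>) u p k'))
       = (\<Sum>n\<le>Lf\<^sup>2 - 1. \<Sum>n'\<le>Lf\<^sup>2 - 1.
            triple n p k u * cnj (triple n' p k' u) * (LINT \<omega>|M. d \<omega> n * cnj (e \<omega> n')))"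
  unfolding triple_proj_def by (rule integral_lincomb_mult_cnj) (auto intro: assms)

lemma normal_eq_iff_normal_equations:
  assumes s: "\<And>n. square_integrable M (\<lambda>\<omega>. s \<omega> n)" and z: "\<And>n. square_integrable M (\<lambda>\<omega>. z \<omega> n)"
    and uncorr1: "\<And>n n'. (LINT \<omega>|M. s \<omega> n * cnj (z \<omega> n')) = 0"
    and uncorr2: "\<And>n n'. (LINT \<omega>|M. z \<omega> n * cnj (s \<omega> n')) = 0"
  shows "normal_eq M Lf s z \<zeta> p q u \<longleftrightarrow> normal_equations M {-int p..int p}
     (\<lambda>k \<omega>. triple_proj Lf (\<lambda>n. s \<omega> n + z \<omega> n) u p k) (\<lambda>\<omega>. triple_proj Lf (s \<omega>) u p q) (\<zeta> u p q)"
proof -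
  have f: "square_integrable M (\<lambda>\<omega>. s \<omega> n + z \<omega> n)" for n
    by (intro square_integrable_add s z)
  have "(LINT \<omega>|M. (s \<omega> n + z \<omega> n) * cnj (s \<omega> n' + z \<omega> n')) = cov M s n n' + cov M z n n'" for n n'
    unfolding cov_def
    by (simp add: integral_add_mult_cnj integral_mult_cnj_add f s z uncorr1 uncorr2 del: complex_cnj_add)
  moreover have "(LINT \<omega>|M. s \<omega> n * cnj (s \<omega> n' + z \<omega> n')) = cov M s n n'" for n n'
    unfolding cov_def by (simp add: integral_mult_cnj_add s z uncorr1 del: complex_cnj_add)
  ultimately show ?thesis
    unfolding normal_eq_def normal_equations_def matA_def vecb_def
    by (simp add: integral_triple_proj_mult_cnj f s)
qed

lemma (in wigner_basis) mse_eq_sum_mean_sq_residual: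
  assumes "\<And>n. square_integrable M (\<lambda>\<omega>. s \<omega> n)" "\<And>n. square_integrable M (\<lambda>\<omega>. z \<omega> n)"
  shows "mse M D Lf Lh h s z \<zeta> = (\<Sum>u\<le>Ng Lf Lh. \<Sum>p<Lh. window_weight h p * (\<Sum>q\<in>{-int p..int p}.
     mean_sq_residual M {-int p..int p} (\<lambda>k \<omega>. triple_proj Lf (\<lambda>n. s \<omega> n + z \<omega> n) u p k)
       (\<lambda>\<omega>. triple_proj Lf (s \<omega>) u p q) (\<zeta> u p q)))"
proof -
  have "integrable M (\<lambda>\<omega>. (cmod ((\<Sum>k\<in>{-int p..int p}. triple_proj Lf (\<lambda>n. s \<omega> n + z \<omega> n) u p k * \<phi> k)
      - triple_proj Lf (s \<omega>) u p q))\<^sup>2)" for u p q \<phi>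
    by (intro integrable_sq_residual square_integrable_triple_proj square_integrable_add assms) simp
  then show ?thesis
    unfolding mse_def so3_norm_nu_minus_g_squared mean_sq_residual_def
    by (simp add: Bochner_Integration.integrable_sum)
qed

theorem theorem1:
  fixes M :: "'w measure"
    and s z :: "'w \<Rightarrow> nat \<Rightarrow> complex"
    and h :: "nat \<Rightarrow> int \<Rightarrow> complex"
    and D :: "nat \<Rightarrow> int \<Rightarrow> int \<Rightarrow> real \<times> real \<times> real \<Rightarrow> complex"
    and Lf Lh :: nat
  assumes prob: "prob_space M"
    and s_meas: "\<And>n. (\<lambda>\<omega>. s \<omega> n) \<in> borel_measurable M"
    and z_meas: "\<And>n. (\<lambda>\<omega>. z \<omega> n) \<in> borel_measurable M"
    and s_sq: "\<And>n. integrable M (\<lambda>\<omega>. (cmod (s \<omega> n))\<^sup>2)"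
    and z_sq: "\<And>n. integrable M (\<lambda>\<omega>. (cmod (z \<omega> n))\<^sup>2)"
    and s_band: "\<And>\<omega> n. Lf\<^sup>2 \<le> n \<Longrightarrow> s \<omega> n = 0"
    and z_band: "\<And>\<omega> n. Lf\<^sup>2 \<le> n \<Longrightarrow> z \<omega> n = 0"
    and z_mean: "\<And>n. (LINT \<omega>|M. z \<omega> n) = 0"
    and uncorr1: "\<And>n n'. (LINT \<omega>|M. s \<omega> n * cnj (z \<omega> n')) = 0"
    and uncorr2: "\<And>n n'. (LINT \<omega>|M. z \<omega> n * cnj (s \<omega> n')) = 0"
    and h_band: "\<And>p q. Lh \<le> p \<Longrightarrow> h p q = 0"
    and D_cont: "\<And>l m m'. continuous_on SO3_box (D l m m')"
    and D_orth: "\<And>l m m' l' k k'. \<bar>m\<bar> \<le> int l \<Longrightarrow> \<bar>m'\<bar> \<le> int l \<Longrightarrow> \<bar>k\<bar> \<le> int l' \<Longrightarrow> \<bar>k'\<bar> \<le> int l' \<Longrightarrow>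
        so3_inner (D l m m') (D l' k k') =
          (if l = l' \<and> m = k \<and> m' = k' then complex_of_real (8 * pi\<^sup>2 / (2 * real l + 1)) else 0)"
  shows "(\<forall>\<zeta>. (\<forall>p<Lh. \<forall>q\<in>{-int p..int p}. \<forall>u\<le>Ng Lf Lh. normal_eq M Lf s z \<zeta> p q u)
            \<longrightarrow> (\<forall>\<zeta>'. mse M D Lf Lh h s z \<zeta> \<le> mse M D Lf Lh h s z \<zeta>'))
       \<and> (\<forall>\<zeta>. (\<forall>\<zeta>'. mse M D Lf Lh h s z \<zeta> \<le> mse M D Lf Lh h s z \<zeta>')
            \<longrightarrow> (\<forall>p<Lh. \<forall>q\<in>{-int p..int p}. \<forall>u\<le>Ng Lf Lh.
                   (\<Sum>q'\<in>{-int p..int p}. (cmod (h p q'))\<^sup>2) \<noteq> 0 \<longrightarrow> normal_eq M Lf s z \<zeta> p q u))"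
proof -
  interpret wigner_basis D
    using D_cont D_orth by unfold_locales
  let ?V = "\<lambda>u p q. mean_sq_residual M {-int p..int p} (\<lambda>k \<omega>. triple_proj Lf (\<lambda>n. s \<omega> n + z \<omega> n) u p k)
              (\<lambda>\<omega>. triple_proj Lf (s \<omega>) u p q)"
  have s: "\<And>n. square_integrable M (\<lambda>\<omega>. s \<omega> n)" and z: "\<And>n. square_integrable M (\<lambda>\<omega>. z \<omega> n)"
    using s_meas s_sq z_meas z_sq by (simp_all add: square_integrable_def)
  note mse = mse_eq_sum_mean_sq_residual[OF s z]
  have optimal_iff: "(\<forall>\<psi>. ?V u p q (\<zeta> u p q) \<le> ?V u p q \<psi>) \<longleftrightarrow> normal_eq M Lf s z \<zeta> p q u" for \<zeta> u p q
    unfolding normal_eq_iff_normal_equations[OF s z uncorr1 uncorr2]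
    by (intro minimal_iff_normal_equations square_integrable_triple_proj square_integrable_add s z) simp
  show ?thesis
  proof (intro conjI allI impI ballI)
    fix \<zeta> \<zeta>'
    assume "\<forall>p<Lh. \<forall>q\<in>{-int p..int p}. \<forall>u\<le>Ng Lf Lh. normal_eq M Lf s z \<zeta> p q u"
    then have "?V u p q (\<zeta> u p q) \<le> ?V u p q (\<zeta>' u p q)"
      if "u \<le> Ng Lf Lh" "p < Lh" "q \<in> {-int p..int p}" for u p q
      using that optimal_iff by blast
    then show "mse M D Lf Lh h s z \<zeta> \<le> mse M D Lf Lh h s z \<zeta>'"
      unfolding mse by (intro sum_mono mult_left_mono window_weight_nonneg) auto
  next
    fix \<zeta> p q u
    assume optimal: "\<forall>\<zeta>'. mse M D Lf Lh h s z \<zeta> \<le> mse M D Lf Lh h s z \<zeta>'"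
      and "p < Lh" "q \<in> {-int p..int p}" "u \<le> Ng Lf Lh"
      and window: "(\<Sum>q'\<in>{-int p..int p}. (cmod (h p q'))\<^sup>2) \<noteq> 0"
    have "?V u p q (\<zeta> u p q) \<le> ?V u p q \<psi>" for \<psi>
      using optimal unfolding mse
      by (rule minimal_weighted_block_sum_imp_minimal_block[where Q = "\<lambda>p. {-int p..int p}"])
         (use \<open>p < Lh\<close> \<open>q \<in> {-int p..int p}\<close> \<open>u \<le> Ng Lf Lh\<close> window_weight_pos[of h p, OF window] in auto)
    then show "normal_eq M Lf s z \<zeta> p q u"
      using optimal_iff by blast
  qed
qed

end
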